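(* Let $n\geq 2$ and let $\mathbf{TP}(\alpha_2,\dots,\alpha_n)$ and $\mathbf{TP}'(\alpha_2',\dots,\alpha_n')$ be isomorphic transposed Poisson algebras. Then there exists an automorphism $\varphi$ of the associative algebra $\mu_0^n$, with parameters $A_1,\dots,A_n\in\mathbb{C}$, $A_1\neq 0$, such that for every $2\leq t\leq n$: \[ \sum_{i=2}^{t}\sum_{k_1+\cdots+k_i=t}A_{k_1}\cdots A_{k_i}\,\alpha_i'=\sum_{j=2}^{t}\sum_{i=1}^{t-j+1}\sum_{k_1+k_2=t-i-j+3}(t-2i-j+3)\,A_iA_{k_1}A_{k_2}\,\alpha_j, \] where the inner sums run over positive integers $k_1,k_2,\dots$.
   Context: $\mu_0^n$ is the complex commutative associative algebra with basis $\{e_1,\dots,e_n\}$ and $e_i\cdot e_j=e_{i+j}$ for $2\leq i+j\leq n$, other products zero. Every automorphism $\varphi$ of $\mu_0^n$ has the form $\varphi(e_1)=\sum_{i=1}^nA_ie_i$ and $\varphi(e_i)=\sum_{j=i}^n\sum_{k_1+\cdots+k_i=j}A_{k_1}\cdots A_{k_i}e_j$ for $2\leq i\leq n$, with $A_1\neq0$; $A_1,\dots,A_n$ are called its parameters. For $\alpha_2,\dots,\alpha_n\in\mathbb{C}$, $\mathbf{TP}(\alpha_2,\dots,\alpha_n)$ denotes $\mu_0^n$ with its associative product together with the bracket $[e_i,e_j]=(j-i)\sum_{t=i+j-1}^{n}\alpha_{t-i-j+3}e_t$ for $3\leq i+j\leq n+1$, other brackets of basis elements zero; it is a transposed Poisson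 algebra (commutative associative product, Lie bracket, and $2z\cdot[x,y]=[z\cdot x,y]+[x,z\cdot y]$). Isomorphisms preserve both operations. *)

theory Defs
  imports Complex_Main
begin

text \<open>The underlying vector space of mu_0^n: complex vectors with coordinates
  indexed by 1..n, represented as functions nat => complex vanishing outside {1..n}.\<close>

definition vspace :: "nat \<Rightarrow> (nat \<Rightarrow> complex) set" where
  "vspace n = {x. \<forall>t. (t < 1 \<or> t > n) \<longrightarrow> x t = 0}"

definition ebasis :: "nat \<Rightarrow> nat \<Rightarrow> complex" where
  "ebasis i = (\<lambda>t. if t = i then 1 else 0)"

text \<open>Associative product of mu_0^n: e_i e_j = e_(i+j) if i+j <= n, else 0
  (bilinear extension).\<close>
definition mu0_mult :: "nat \<Rightarrow> (nat \<Rightarrow> complex) \<Rightarrow> (nat \<Rightarrow> complex) \<Rightarrow> nat \<Rightarrow> complex" where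
  "mu0_mult n x y = (\<lambda>t. if 1 \<le> t \<and> t \<le> n then
      (\<Sum>i=1..n. \<Sum>j=1..n. if i + j = t then x i * y j else 0) else 0)"

text \<open>Bracket of TP(alpha_2,...,alpha_n):
  [e_i,e_j] = (j-i) * sum_{t=i+j-1}^{n} alpha_(t-i-j+3) e_t for 3 <= i+j <= n+1,
  other brackets of basis elements zero (bilinear extension).\<close>
definition tp_bracket :: "nat \<Rightarrow> (nat \<Rightarrow> complex) \<Rightarrow> (nat \<Rightarrow> complex) \<Rightarrow> (nat \<Rightarrow> complex) \<Rightarrow> nat \<Rightarrow> complex" where
  "tp_bracket n \<alpha> x y = (\<lambda>t. if 1 \<le> t \<and> t \<le> n then
      (\<Sum>i=1..n. \<Sum>j=1..n.
         if 3 \<le> i + j \<and> i + j \<le> n + 1 \<and> i + j - 1 \<le> t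
         then x i * y j * (of_int (int j - int i) * \<alpha> (t + 3 - (i + j)))
         else 0) else 0)"

definition is_linear_on :: "nat \<Rightarrow> ((nat \<Rightarrow> complex) \<Rightarrow> (nat \<Rightarrow> complex)) \<Rightarrow> bool" where
  "is_linear_on n f \<longleftrightarrow>
     (\<forall>x\<in>vspace n. \<forall>y\<in>vspace n. f (\<lambda>t. x t + y t) = (\<lambda>t. f x t + f y t)) \<and>
     (\<forall>c. \<forall>x\<in>vspace n. f (\<lambda>t. c * x t) = (\<lambda>t. c * f x t))"

definition mu0_automorphism :: "nat \<Rightarrow> ((nat \<Rightarrow> complex) \<Rightarrow> (nat \<Rightarrow> complex)) \<Rightarrow> bool" where
  "mu0_automorphism n f \<longleftrightarrow> is_linear_on n f \<and> bij_betw f (vspace n) (vspace n) \<and>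
     (\<forall>x\<in>vspace n. \<forall>y\<in>vspace n. f (mu0_mult n x y) = mu0_mult n (f x) (f y))"

definition tp_isomorphism :: "nat \<Rightarrow> (nat \<Rightarrow> complex) \<Rightarrow> (nat \<Rightarrow> complex) \<Rightarrow> ((nat \<Rightarrow> complex) \<Rightarrow> (nat \<Rightarrow> complex)) \<Rightarrow> bool" where
  "tp_isomorphism n \<alpha> \<alpha>' f \<longleftrightarrow> is_linear_on n f \<and> bij_betw f (vspace n) (vspace n) \<and>
     (\<forall>x\<in>vspace n. \<forall>y\<in>vspace n. f (mu0_mult n x y) = mu0_mult n (f x) (f y)) \<and>
     (\<forall>x\<in>vspace n. \<forall>y\<in>vspace n. f (tp_bracket n \<alpha> x y) = tp_bracket n \<alpha>' (f x) (f y))"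

definition tp_isomorphic :: "nat \<Rightarrow> (nat \<Rightarrow> complex) \<Rightarrow> (nat \<Rightarrow> complex) \<Rightarrow> bool" where
  "tp_isomorphic n \<alpha> \<alpha>' \<longleftrightarrow> (\<exists>f. tp_isomorphism n \<alpha> \<alpha>' f)"

definition comp_sum :: "(nat \<Rightarrow> complex) \<Rightarrow> nat \<Rightarrow> nat \<Rightarrow> complex" where
  "comp_sum A i t = (\<Sum>ks\<in>{ks. length ks = i \<and> set ks \<subseteq> {1..t} \<and> sum_list ks = t}.
                        prod_list (map A ks))"

end

(* Invert the given isomorphism to get phi : TP(alpha') -> TP(alpha), an automorphism of mu_0^n.
   Since e_i = e_1^i, phi(e_i) = phi(e_1)^i, whose coordinates are the composition sums of the
   parameters A_k = phi(e_1)_k.  The identity is the t-th coordinate of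
   phi [e_1, e_2]' = sum_i alpha'_i phi(e_i)  versus  [phi(e_1), phi(e_2)].
   Finally A_1 <> 0 because phi(y)_1 = y_1 A_1 for all y, while e_1 lies in the image of phi. *)

theory Submission
  imports Defs
begin

lemma vspace_zero_outside: "x \<in> vspace n \<Longrightarrow> t = 0 \<or> n < t \<Longrightarrow> x t = 0"
  by (auto simp: vspace_def)

lemma mu0_mult_in_vspace: "mu0_mult n x y \<in> vspace n"
  by (simp add: vspace_def mu0_mult_def not_le)

lemma tp_bracket_in_vspace: "tp_bracket n \<beta> x y \<in> vspace n"
  by (simp add: vspace_def tp_bracket_def not_le)

lemma ebasis_in_vspace: "1 \<le> i \<Longrightarrow> i \<le> n \<Longrightarrow> ebasis i \<in> vspace n"
  by (auto simp: vspace_def ebasis_def)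

lemma vspace_add: "x \<in> vspace n \<Longrightarrow> y \<in> vspace n \<Longrightarrow> (\<lambda>t. x t + y t) \<in> vspace n"
  by (auto simp: vspace_def)

lemma vspace_scale: "x \<in> vspace n \<Longrightarrow> (\<lambda>t. c * x t) \<in> vspace n"
  by (auto simp: vspace_def)

lemma vspace_sum: "(\<And>i. i \<in> I \<Longrightarrow> v i \<in> vspace n) \<Longrightarrow> (\<lambda>t. \<Sum>i\<in>I. c i * v i t) \<in> vspace n"
  by (auto simp: vspace_def)

lemma linear_on_add:
  "is_linear_on n f \<Longrightarrow> x \<in> vspace n \<Longrightarrow> y \<in> vspace n \<Longrightarrow> f (\<lambda>t. x t + y t) = (\<lambda>t. f x t + f y t)"
  by (simp add: is_linear_on_def)

lemma linear_on_scale: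
  "is_linear_on n f \<Longrightarrow> x \<in> vspace n \<Longrightarrow> f (\<lambda>t. c * x t) = (\<lambda>t. c * f x t)"
  by (simp add: is_linear_on_def)

lemma linear_on_zero: "is_linear_on n f \<Longrightarrow> f (\<lambda>t. 0) = (\<lambda>t. 0)"
  using linear_on_scale[of n f "\<lambda>t. 0" 0] by (simp add: vspace_def)

lemma linear_on_sum:
  assumes f: "is_linear_on n f" and "finite I" and "\<And>i. i \<in> I \<Longrightarrow> v i \<in> vspace n"
  shows "f (\<lambda>t. \<Sum>i\<in>I. c i * v i t) = (\<lambda>t. \<Sum>i\<in>I. c i * f (v i) t)"
  using assms(2,3)
proof (induction I rule: finite_induct)
  case empty
  then show ?case using linear_on_zero[OF f] by simp
next
  case (insert i I)
  then have "f (\<lambda>t. \<Sum>j\<in>insert i I. c j * v j t) = (\<lambda>t. f (\<lambda>t. c i * v i t) t + f (\<lambda>t. \<Sum>j\<in>I. c j * v j t) t)"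
    using linear_on_add[OF f, of "\<lambda>t. c i * v i t" "\<lambda>t. \<Sum>j\<in>I. c j * v j t"]
    by (simp add: vspace_scale vspace_sum)
  with insert show ?case by (simp add: linear_on_scale[OF f])
qed

lemma length_le_sum_list: "0 \<notin> set ks \<Longrightarrow> length ks \<le> sum_list (ks :: nat list)"
  by (induction ks) auto

lemma comp_sum_eq_0: "t < i \<Longrightarrow> comp_sum A i t = 0"
  using length_le_sum_list by (fastforce simp: comp_sum_def intro: sum.neutral)

lemma finite_compositions: "finite {ks. length ks = i \<and> set ks \<subseteq> {1..t} \<and> sum_list ks = (t::nat)}"
  by (rule finite_subset[OF _ finite_lists_length_eq[of "{1..t}" i]]) auto

lemma comp_sum_0: "comp_sum A 0 t = (if t = 0 then 1 else 0)"
proof -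
  have "{ks. length ks = 0 \<and> set ks \<subseteq> {1..t} \<and> sum_list ks = t} = (if t = 0 then {[]} else {})"
    by auto
  then show ?thesis by (simp add: comp_sum_def)
qed

lemma comp_sum_Suc: "comp_sum A (Suc i) t = (\<Sum>k=1..t. A k * comp_sum A i (t - k))"
proof -
  let ?C = "\<lambda>i t. {ks. length ks = i \<and> set ks \<subseteq> {1..t} \<and> sum_list ks = (t::nat)}"
  have "comp_sum A (Suc i) t = (\<Sum>(k, ks)\<in>Sigma {1..t} (\<lambda>k. ?C i (t - k)). A k * prod_list (map A ks))"
    unfolding comp_sum_def
  proof (rule sum.reindex_bij_witness[where i="\<lambda>(k, ks). k # ks" and j="\<lambda>ks. (hd ks, tl ks)"])
    fix ks assume ks: "ks \<in> ?C (Suc i) t"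
    then obtain k ks' where [simp]: "ks = k # ks'" by (cases ks) auto
    have "\<forall>x\<in>set ks'. x \<le> sum_list ks'" using member_le_sum_list by blast
    then show "(hd ks, tl ks) \<in> Sigma {1..t} (\<lambda>k. ?C i (t - k))" using ks by auto
    show "(\<lambda>(k, ks). k # ks) (hd ks, tl ks) = ks" by simp
    show "(\<lambda>(k, ks). A k * prod_list (map A ks)) (hd ks, tl ks) = prod_list (map A ks)" by simp
  qed (auto simp: subset_iff)
  also have "\<dots> = (\<Sum>k=1..t. \<Sum>ks\<in>?C i (t - k). A k * prod_list (map A ks))"
    by (intro sum.Sigma[symmetric] finite_atLeastAtMost ballI finite_compositions)
  also have "\<dots> = (\<Sum>k=1..t. A k * comp_sum A i (t - k))"
    by (simp add: comp_sum_def sum_distrib_left)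
  finally show ?thesis .
qed

lemma comp_sum_1: "1 \<le> t \<Longrightarrow> comp_sum A 1 t = A t"
proof -
  assume "1 \<le> t"
  have "comp_sum A 1 t = (\<Sum>k=1..t. A k * comp_sum A 0 (t - k))"
    using comp_sum_Suc[of A 0 t] by simp
  also have "\<dots> = (\<Sum>k=1..t. if k = t then A k else 0)"
    by (rule sum.cong) (auto simp: comp_sum_0)
  also have "\<dots> = A t" using \<open>1 \<le> t\<close> by simp
  finally show ?thesis .
qed

lemma mu0_mult_apply:
  "1 \<le> t \<Longrightarrow> t \<le> n \<Longrightarrow> mu0_mult n x y t = (\<Sum>a=1..<t. x a * y (t - a))"
proof -
  assume t: "1 \<le> t" "t \<le> n"
  have "mu0_mult n x y t = (\<Sum>a=1..n. \<Sum>b=1..n. if b = t - a \<and> a < t then x a * y b else 0)"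
    using t unfolding mu0_mult_def by (auto intro!: sum.cong)
  also have "\<dots> = (\<Sum>a=1..n. if a < t then x a * y (t - a) else 0)"
    using t by (intro sum.cong refl) (auto simp: sum.delta')
  also have "\<dots> = (\<Sum>a=1..<t. x a * y (t - a))"
    using t by (intro sum.mono_neutral_cong_right) auto
  finally show ?thesis .
qed

lemma mu0_mult_ebasis1:
  "mu0_mult n (ebasis 1) x = (\<lambda>t. if 2 \<le> t \<and> t \<le> n then x (t - 1) else 0)"
proof
  fix t
  show "mu0_mult n (ebasis 1) x t = (if 2 \<le> t \<and> t \<le> n then x (t - 1) else 0)"
  proof (cases "1 \<le> t \<and> t \<le> n")
    case True
    then have "mu0_mult n (ebasis 1) x t = (\<Sum>a=1..<t. ebasis 1 a * x (t - a))"
      by (simp add: mu0_mult_apply)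
    also have "\<dots> = (\<Sum>a=1..<t. if a = 1 then x (t - a) else 0)"
      by (rule sum.cong) (simp_all add: ebasis_def)
    finally show ?thesis using True by (simp add: sum.delta)
  qed (auto simp: mu0_mult_def)
qed

lemma ebasis_Suc: "1 \<le> i \<Longrightarrow> Suc i \<le> n \<Longrightarrow> ebasis (Suc i) = mu0_mult n (ebasis 1) (ebasis i)"
  unfolding mu0_mult_ebasis1 by (auto simp: ebasis_def fun_eq_iff)

lemma mu0_hom_ebasis:
  assumes mult: "\<forall>x\<in>vspace n. \<forall>y\<in>vspace n. \<phi> (mu0_mult n x y) = mu0_mult n (\<phi> x) (\<phi> y)"
  shows "1 \<le> i \<Longrightarrow> i \<le> n \<Longrightarrow> 1 \<le> t \<Longrightarrow> t \<le> n \<Longrightarrow> \<phi> (ebasis i) t = comp_sum (\<phi> (ebasis 1)) i t"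
proof (induction i arbitrary: t rule: nat_induct_at_least)
  case base
  then show ?case using comp_sum_1[of t "\<phi> (ebasis 1)"] by simp
next
  case (Suc i)
  let ?A = "\<phi> (ebasis 1)"
  have "\<phi> (ebasis (Suc i)) t = mu0_mult n ?A (\<phi> (ebasis i)) t"
    using Suc mult ebasis_in_vspace[of 1 n] ebasis_in_vspace[of i n] by (simp add: ebasis_Suc)
  also have "\<dots> = (\<Sum>a=1..<t. ?A a * \<phi> (ebasis i) (t - a))"
    using Suc by (simp add: mu0_mult_apply)
  also have "\<dots> = (\<Sum>a=1..<t. ?A a * comp_sum ?A i (t - a))"
    using Suc by (intro sum.cong refl) auto
  also have "\<dots> = (\<Sum>a=1..t. ?A a * comp_sum ?A i (t - a))"
    using Suc by (simp add: sum.last_plus comp_sum_eq_0)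
  also have "\<dots> = comp_sum ?A (Suc i) t"
    by (simp add: comp_sum_Suc)
  finally show ?case .
qed

text \<open>Every element is \<open>y\<^sub>1 e\<^sub>1 + e\<^sub>1 w\<close>, and \<open>\<phi> (e\<^sub>1 w) = \<phi> e\<^sub>1 \<phi> w\<close> has no \<open>e\<^sub>1\<close>-coordinate.\<close>
lemma mu0_hom_coordinate_1:
  assumes lin: "is_linear_on n \<phi>"
    and mult: "\<forall>x\<in>vspace n. \<forall>y\<in>vspace n. \<phi> (mu0_mult n x y) = mu0_mult n (\<phi> x) (\<phi> y)"
    and n: "1 \<le> n" and y: "y \<in> vspace n"
  shows "\<phi> y 1 = y 1 * \<phi> (ebasis 1) 1"
proof -
  define w where "w = (\<lambda>s. if 1 \<le> s then y (s + 1) else 0)"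
  have w: "w \<in> vspace n"
    using y by (auto simp: w_def vspace_def)
  have e1: "ebasis 1 \<in> vspace n"
    using n by (rule ebasis_in_vspace[OF order_refl])
  have decomp: "(\<lambda>t. y 1 * ebasis 1 t + mu0_mult n (ebasis 1) w t) = y"
  proof
    fix t
    show "y 1 * ebasis 1 t + mu0_mult n (ebasis 1) w t = y t"
      unfolding mu0_mult_ebasis1 using vspace_zero_outside[OF y, of t]
      by (cases "t = 0 \<or> t = 1") (auto simp: ebasis_def w_def)
  qed
  have "\<phi> (\<lambda>t. y 1 * ebasis 1 t + mu0_mult n (ebasis 1) w t)
      = (\<lambda>t. \<phi> (\<lambda>t. y 1 * ebasis 1 t) t + \<phi> (mu0_mult n (ebasis 1) w) t)"
    by (rule linear_on_add[OF lin vspace_scale[OF e1] mu0_mult_in_vspace])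
  then have "\<phi> y = (\<lambda>t. y 1 * \<phi> (ebasis 1) t + mu0_mult n (\<phi> (ebasis 1)) (\<phi> w) t)"
    using mult e1 w by (simp only: decomp linear_on_scale[OF lin e1])
  then show ?thesis
    by (simp add: mu0_mult_def)
qed

lemma mu0_hom_first_parameter_nonzero:
  assumes "is_linear_on n \<phi>"
    and "\<forall>x\<in>vspace n. \<forall>y\<in>vspace n. \<phi> (mu0_mult n x y) = mu0_mult n (\<phi> x) (\<phi> y)"
    and "1 \<le> n" and "ebasis 1 \<in> \<phi> ` vspace n"
  shows "\<phi> (ebasis 1) 1 \<noteq> 0"
proof -
  obtain y where y: "y \<in> vspace n" and "\<phi> y = ebasis 1"
    using assms(4) by auto
  then have "\<phi> y 1 = 1"
    by (simp add: ebasis_def)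
  moreover have "\<phi> y 1 = y 1 * \<phi> (ebasis 1) 1"
    by (rule mu0_hom_coordinate_1[OF assms(1-3) y])
  ultimately show ?thesis
    by (metis mult_zero_right zero_neq_one)
qed

lemma inv_into_hom:
  assumes f: "bij_betw f A B"
    and closed: "\<And>x y. x \<in> A \<Longrightarrow> y \<in> A \<Longrightarrow> P x y \<in> A"
    and hom: "\<And>x y. x \<in> A \<Longrightarrow> y \<in> A \<Longrightarrow> f (P x y) = Q (f x) (f y)"
    and "x \<in> B" "y \<in> B"
  shows "inv_into A f (Q x y) = P (inv_into A f x) (inv_into A f y)"
proof -
  let ?g = "inv_into A f"
  have "?g x \<in> A" "?g y \<in> A" "f (?g x) = x" "f (?g y) = y"
    using f \<open>x \<in> B\<close> \<open>y \<in> B\<close> by (auto simp: bij_betw_def inv_into_into f_inv_into_f)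
  then have "Q x y = f (P (?g x) (?g y))"
    using hom by simp
  then show ?thesis
    using f closed \<open>?g x \<in> A\<close> \<open>?g y \<in> A\<close> by (simp add: bij_betw_def)
qed

lemma tp_isomorphism_inv_into:
  assumes "tp_isomorphism n \<alpha> \<alpha>' f"
  shows "tp_isomorphism n \<alpha>' \<alpha> (inv_into (vspace n) f)"
proof -
  have f: "bij_betw f (vspace n) (vspace n)" and lin: "is_linear_on n f"
    using assms by (auto simp: tp_isomorphism_def)
  note inv_hom = inv_into_hom[OF f]
  have "is_linear_on n (inv_into (vspace n) f)"
    unfolding is_linear_on_def
    using inv_hom[of "\<lambda>x y t. x t + y t" "\<lambda>x y t. x t + y t"]
      inv_hom[of "\<lambda>x y t. c * x t" "\<lambda>x y t. c * x t" for c]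
    by (simp add: vspace_add vspace_scale linear_on_add[OF lin] linear_on_scale[OF lin])
  moreover have "bij_betw (inv_into (vspace n) f) (vspace n) (vspace n)"
    using f by (rule bij_betw_inv_into)
  ultimately show ?thesis
    using assms inv_hom[of "mu0_mult n" "mu0_mult n"] inv_hom[of "tp_bracket n \<alpha>" "tp_bracket n \<alpha>'"]
    by (simp add: tp_isomorphism_def mu0_mult_in_vspace tp_bracket_in_vspace)
qed

text \<open>Substituting \<open>j = t + 3 - (a + b)\<close>, \<open>i = a\<close> in the defining double sum; the constraint
  \<open>a + b \<le> n + 1\<close> is implied by \<open>t \<le> n\<close>.\<close>
lemma tp_bracket_apply:
  assumes t: "1 \<le> t" "t \<le> n"
  shows "tp_bracket n \<beta> x y t =
    (\<Sum>j=2..t. \<Sum>i=1..t+2-j. of_int (int t - 2 * int i - int j + 3) * x i * y (t + 3 - (i + j)) * \<beta> j)"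
proof -
  define T where "T = {(a, b) \<in> {1..n} \<times> {1..n}. 3 \<le> a + b \<and> a + b \<le> n + 1 \<and> a + b - 1 \<le> t}"
  have "tp_bracket n \<beta> x y t = (\<Sum>(a, b)\<in>{1..n} \<times> {1..n}. if 3 \<le> a + b \<and> a + b \<le> n + 1 \<and> a + b - 1 \<le> t
      then x a * y b * (of_int (int b - int a) * \<beta> (t + 3 - (a + b))) else 0)"
    using t by (simp add: tp_bracket_def sum.cartesian_product)
  also have "\<dots> = (\<Sum>(a, b)\<in>T. x a * y b * (of_int (int b - int a) * \<beta> (t + 3 - (a + b))))"
    by (rule sum.mono_neutral_cong_right) (auto simp: T_def split: if_splits)
  also have "\<dots> = (\<Sum>(j, i)\<in>Sigma {2..t} (\<lambda>j. {1..t+2-j}).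
      of_int (int t - 2 * int i - int j + 3) * x i * y (t + 3 - (i + j)) * \<beta> j)"
  proof (rule sum.reindex_bij_witness[where i="\<lambda>(j, i). (i, t + 3 - (i + j))" and j="\<lambda>(a, b). (t + 3 - (a + b), a)"])
    fix p assume "p \<in> T"
    then obtain a b where p: "p = (a, b)" "1 \<le> a" "1 \<le> b" "3 \<le> a + b" "a + b - 1 \<le> t"
      by (auto simp: T_def)
    then have "int b - int a = int t - 2 * int a - int (t + 3 - (a + b)) + 3"
      by linarith
    with p show "(\<lambda>(j, i). of_int (int t - 2 * int i - int j + 3) * x i * y (t + 3 - (i + j)) * \<beta> j)
        ((\<lambda>(a, b). (t + 3 - (a + b), a)) p) = (\<lambda>(a, b). x a * y b * (of_int (int b - int a) * \<beta> (t + 3 - (a + b)))) p"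
      by (simp add: mult_ac)
  qed (use t in \<open>auto simp: T_def\<close>)
  also have "\<dots> = (\<Sum>j=2..t. \<Sum>i=1..t+2-j. of_int (int t - 2 * int i - int j + 3) * x i * y (t + 3 - (i + j)) * \<beta> j)"
    by (rule sum.Sigma[symmetric]) auto
  finally show ?thesis .
qed

lemma tp_bracket_ebasis12:
  "tp_bracket n \<beta> (ebasis 1) (ebasis 2) = (\<lambda>s. if 2 \<le> s \<and> s \<le> n then \<beta> s else 0)"
proof
  fix s
  show "tp_bracket n \<beta> (ebasis 1) (ebasis 2) s = (if 2 \<le> s \<and> s \<le> n then \<beta> s else 0)"
  proof (cases "1 \<le> s \<and> s \<le> n")
    case True
    have "tp_bracket n \<beta> (ebasis 1) (ebasis 2) s = (\<Sum>j=2..s. \<Sum>i=1..s+2-j. if i = 1 \<and> j = s then \<beta> j else 0)"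
      using True by (simp add: tp_bracket_apply) (intro sum.cong refl, auto simp: ebasis_def)
    also have "\<dots> = (\<Sum>j=2..s. if j = s then \<beta> j else 0)"
    proof (rule sum.cong[OF refl])
      fix j
      show "(\<Sum>i=1..s+2-j. if i = 1 \<and> j = s then \<beta> j else 0) = (if j = s then \<beta> j else 0)"
        by (cases "j = s") (simp_all add: sum.delta)
    qed
    finally show ?thesis using True by simp
  qed (auto simp: tp_bracket_def)
qed

lemma vspace_basis_expansion: "x \<in> vspace n \<Longrightarrow> x = (\<lambda>t. \<Sum>i=1..n. x i * ebasis i t)"
proof
  fix t assume "x \<in> vspace n"
  have "(\<Sum>i=1..n. x i * ebasis i t) = (\<Sum>i=1..n. if i = t then x t else 0)"
    by (rule sum.cong) (auto simp: ebasis_def)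
  then show "x t = (\<Sum>i=1..n. x i * ebasis i t)"
    using vspace_zero_outside[OF \<open>x \<in> vspace n\<close>, of t] by auto
qed

lemma linear_on_basis_expansion:
  assumes "is_linear_on n f" and x: "x \<in> vspace n"
  shows "f x = (\<lambda>t. \<Sum>i=1..n. x i * f (ebasis i) t)"
proof -
  have "f x = f (\<lambda>t. \<Sum>i=1..n. x i * ebasis i t)"
    using vspace_basis_expansion[OF x] by (rule arg_cong)
  also have "\<dots> = (\<lambda>t. \<Sum>i=1..n. x i * f (ebasis i) t)"
    using assms(1) by (rule linear_on_sum) (auto intro: ebasis_in_vspace)
  finally show ?thesis .
qed

lemma tp_hom_parameter_identity:
  assumes lin: "is_linear_on n \<phi>"
    and mult: "\<forall>x\<in>vspace n. \<forall>y\<in>vspace n. \<phi> (mu0_mult n x y) = mu0_mult n (\<phi> x) (\<phi> y)"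
    and br: "\<forall>x\<in>vspace n. \<forall>y\<in>vspace n. \<phi> (tp_bracket n \<alpha>' x y) = tp_bracket n \<alpha> (\<phi> x) (\<phi> y)"
    and t: "2 \<le> t" "t \<le> n"
  defines "A \<equiv> \<phi> (ebasis 1)"
  shows "(\<Sum>i=2..t. comp_sum A i t * \<alpha>' i) =
    (\<Sum>j=2..t. \<Sum>i=1..t-j+1. of_int (int t - 2 * int i - int j + 3) * A i * comp_sum A 2 (t + 3 - (i + j)) * \<alpha> j)"
proof -
  have e1: "ebasis 1 \<in> vspace n" and e2: "ebasis 2 \<in> vspace n"
    using t by (auto intro: ebasis_in_vspace)
  have powers: "\<phi> (ebasis i) s = comp_sum A i s" if "1 \<le> i" "i \<le> n" "1 \<le> s" "s \<le> n" for i s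
    unfolding A_def using mu0_hom_ebasis[OF mult] that by blast
  have "(\<Sum>i=2..t. comp_sum A i t * \<alpha>' i) = (\<Sum>i=2..n. \<alpha>' i * \<phi> (ebasis i) t)"
    using t by (intro sum.mono_neutral_cong_left) (auto simp: comp_sum_eq_0 powers)
  also have "\<dots> = (\<Sum>i=1..n. tp_bracket n \<alpha>' (ebasis 1) (ebasis 2) i * \<phi> (ebasis i) t)"
    unfolding tp_bracket_ebasis12 by (intro sum.mono_neutral_cong_left) auto
  also have "\<dots> = \<phi> (tp_bracket n \<alpha>' (ebasis 1) (ebasis 2)) t"
    by (simp add: linear_on_basis_expansion[OF lin tp_bracket_in_vspace])
  also have "\<dots> = tp_bracket n \<alpha> A (\<phi> (ebasis 2)) t"
    using br e1 e2 by (simp add: A_def)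
  also have "\<dots> = (\<Sum>j=2..t. \<Sum>i=1..t+2-j.
      of_int (int t - 2 * int i - int j + 3) * A i * \<phi> (ebasis 2) (t + 3 - (i + j)) * \<alpha> j)"
    using t by (simp add: tp_bracket_apply)
  also have "\<dots> = (\<Sum>j=2..t. \<Sum>i=1..t-j+1.
      of_int (int t - 2 * int i - int j + 3) * A i * comp_sum A 2 (t + 3 - (i + j)) * \<alpha> j)"
    \<comment> \<open>the dropped terms \<open>i = t + 2 - j\<close> contain \<open>\<phi> e\<^sub>2\<close> at coordinate 1, which vanishes\<close>
    using t by (intro sum.cong refl sum.mono_neutral_cong_right) (auto simp: powers comp_sum_eq_0)
  finally show ?thesis .
qed

theorem mainTheorem6:
  fixes n :: nat and \<alpha> \<alpha>' :: "nat \<Rightarrow> complex"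
  assumes "n \<ge> 2"
    and "tp_isomorphic n \<alpha> \<alpha>'"
  shows "\<exists>\<phi>. mu0_automorphism n \<phi> \<and>
           (let A = (\<lambda>i. \<phi> (ebasis 1) i) in
             A 1 \<noteq> 0 \<and>
             (\<forall>t. 2 \<le> t \<and> t \<le> n \<longrightarrow>
                (\<Sum>i=2..t. comp_sum A i t * \<alpha>' i) =
                (\<Sum>j=2..t. \<Sum>i=1..t-j+1.
                    of_int (int t - 2 * int i - int j + 3) * A i * comp_sum A 2 (t + 3 - (i + j)) * \<alpha> j)))"
proof -
  obtain f where "tp_isomorphism n \<alpha> \<alpha>' f"
    using assms(2) unfolding tp_isomorphic_def by blast
  then have iso: "tp_isomorphism n \<alpha>' \<alpha> (inv_into (vspace n) f)"
    by (rule tp_isomorphism_inv_into)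
  define \<phi> where "\<phi> = inv_into (vspace n) f"
  have lin: "is_linear_on n \<phi>" and bij: "bij_betw \<phi> (vspace n) (vspace n)"
    and mult: "\<forall>x\<in>vspace n. \<forall>y\<in>vspace n. \<phi> (mu0_mult n x y) = mu0_mult n (\<phi> x) (\<phi> y)"
    and br: "\<forall>x\<in>vspace n. \<forall>y\<in>vspace n. \<phi> (tp_bracket n \<alpha>' x y) = tp_bracket n \<alpha> (\<phi> x) (\<phi> y)"
    using iso unfolding \<phi>_def tp_isomorphism_def by auto
  have "ebasis 1 \<in> \<phi> ` vspace n"
    using bij assms(1) by (simp add: bij_betw_def ebasis_in_vspace)
  then have "\<phi> (ebasis 1) 1 \<noteq> 0"
    using mu0_hom_first_parameter_nonzero[OF lin mult] assms(1) by simp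
  moreover have "mu0_automorphism n \<phi>"
    using lin bij mult by (simp add: mu0_automorphism_def)
  ultimately show ?thesis
    using tp_hom_parameter_identity[OF lin mult br] by (auto simp: Let_def)
qed

end
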